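(* Let $\mathcal{Q}$, $\mathcal{S}$, $\mathcal{A}$ be countable sets (questions, solutions, answers), let $\mathcal{D}$ be a probability distribution on $\mathcal{Q}$, and let $a^*:\mathcal{Q}\to\mathcal{A}$ assign to each question its reference answer. For each $q$, let $\pi_\theta(\cdot\mid q)$ be a probability distribution on $\mathcal{S}$ and for each $s$ let $\pi_\theta(\cdot\mid s,q)$ be a probability distribution on $\mathcal{A}$, with joint law $\pi_\theta(s,a\mid q)=\pi_\theta(s\mid q)\pi_\theta(a\mid s,q)$ and answer marginal $\pi_\theta(a\mid q)=\sum_s\pi_\theta(s\mid q)\pi_\theta(a\mid s,q)$. For $a$ with $\pi_\theta(a\mid q)>0$ define $\pi_\theta(s'\mid q,a)=\pi_\theta(s'\mid q)\pi_\theta(a\mid s',q)/\pi_\theta(a\mid q)$ and the conditional expectation reward $$\rho(a,a^*(q))=\sum_{s'\in\mathcal{S}}\pi_\theta(s'\mid q,a)\,\pi_\theta(a^*(q)\mid s',q).$$ Then $$\mathcal{L}_\rho(\theta):=\mathbb{E}_{q\sim\mathcal{D},\,(s,a)\sim\pi_\theta(\cdot\mid q)}\big[\rho(a,a^*(q))\big]=\mathbb{E}_{q\sim\mathcal{D},\,(s,a)\sim\pi_\theta(\cdot\mid q)}\big[\mathbb{I}(a=a^*(q))\big],$$ where $\mathbb{I}(a=a^*(q))$ is $1$ if $a=a^*(q)$ and $0$ otherwise.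
   Context: Here $\rho(a,a^* )$ is the conditional expectation reward (CER): the expected likelihood, under the policy, of generating the reference answer $a^*$ from a solution drawn from the posterior over solutions given that the answer $a$ was generated. It is only evaluated at answers $a$ that occur with positive probability, so the left-hand expectation is well defined. *)

theory Defs
  imports "HOL-Probability.Probability"
begin

text \<open>Policy: pS q is pi(. | q) on solutions, pA q s is pi(. | s,q) on answers.\<close>

definition ans_marg :: "('q \<Rightarrow> 's pmf) \<Rightarrow> ('q \<Rightarrow> 's \<Rightarrow> 'a pmf) \<Rightarrow> 'q \<Rightarrow> 'a \<Rightarrow> real" where
  "ans_marg pS pA q a = (\<Sum>\<^sub>\<infinity> s. pmf (pS q) s * pmf (pA q s) a)"

definition sol_post :: "('q \<Rightarrow> 's pmf) \<Rightarrow> ('q \<Rightarrow> 's \<Rightarrow> 'a pmf) \<Rightarrow> 'q \<Rightarrow> 'a \<Rightarrow> 's \<Rightarrow> real" where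
  "sol_post pS pA q a s' = pmf (pS q) s' * pmf (pA q s') a / ans_marg pS pA q a"

definition cer :: "('q \<Rightarrow> 's pmf) \<Rightarrow> ('q \<Rightarrow> 's \<Rightarrow> 'a pmf) \<Rightarrow> 'q \<Rightarrow> 'a \<Rightarrow> 'a \<Rightarrow> real" where
  "cer pS pA q a a' = (\<Sum>\<^sub>\<infinity> s'. sol_post pS pA q a s' * pmf (pA q s') a')"

definition joint :: "('q \<Rightarrow> 's pmf) \<Rightarrow> ('q \<Rightarrow> 's \<Rightarrow> 'a pmf) \<Rightarrow> 'q \<Rightarrow> ('s \<times> 'a) pmf" where
  "joint pS pA q = bind_pmf (pS q) (\<lambda>s. map_pmf (\<lambda>a. (s, a)) (pA q s))"

end

theory Submission
  imports Defs
begin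

text \<open>Fix a question, let b be its reference answer and m the answer marginal. Multiplying the
  conditional expectation reward at a by m a cancels the normalisation of the posterior, leaving
  \<open>\<Sum>s. \<pi>(s) \<pi>(a | s) \<pi>(b | s)\<close>. Summing over a first (Tonelli) removes the answer
  kernel, so the expected reward is \<open>\<Sum>s. \<pi>(s) \<pi>(b | s) = m b\<close>, which is exactly the
  probability of answering b.\<close>

lemma infsetsum_eq_infsum_real:
  fixes f :: "'a \<Rightarrow> real"
  shows "infsetsum f A = (\<Sum>\<^sub>\<infinity>x\<in>A. f x)"
proof (cases "integrable (count_space A) f")
  case True
  then show ?thesis
    by (intro infsetsum_infsum) (simp add: abs_summable_on_def)
next
  case False
  then have "\<not> f summable_on A"
    using summable_on_iff_abs_summable_on_real[of f A] abs_summable_equivalent[of f A]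
    by (simp add: abs_summable_on_def)
  with False show ?thesis
    by (simp add: infsetsum_def not_integrable_integral_eq infsum_not_exists)
qed

lemma pmf_expectation_eq_infsum:
  fixes f :: "'a \<Rightarrow> real"
  shows "measure_pmf.expectation p f = (\<Sum>\<^sub>\<infinity>x. pmf p x * f x)"
  by (simp add: pmf_expectation_eq_infsetsum infsetsum_eq_infsum_real)

lemma has_sum_pmf: "(pmf p has_sum 1) UNIV"
proof -
  have total: "(\<Sum>\<^sub>\<infinity>x. pmf p x) = 1"
    using pmf_expectation_eq_infsum[of p "\<lambda>_. 1"] by simp
  then have "pmf p summable_on UNIV"
    by (metis infsum_not_exists zero_neq_one)
  with total show ?thesis
    by (simp add: has_sum_iff)
qed

lemma summable_on_pmf_mult_bounded:
  fixes f :: "'a \<Rightarrow> real"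
  assumes "\<And>x. 0 \<le> f x" and "\<And>x. f x \<le> B"
  shows "(\<lambda>x. pmf p x * f x) summable_on UNIV"
proof (rule summable_on_comparison_test)
  show "(\<lambda>x. pmf p x * B) summable_on UNIV"
    using has_sum_pmf[of p] by (intro summable_on_cmult_left) (auto simp: summable_on_def)
qed (simp_all add: assms mult_left_mono)

lemma pmf_bind_eq_infsum: "pmf (bind_pmf P K) a = (\<Sum>\<^sub>\<infinity>s. pmf P s * pmf (K s) a)"
  by (simp add: pmf_bind pmf_expectation_eq_infsum)

lemma expectation_posterior_likelihood:
  fixes P :: "'s pmf" and K :: "'s \<Rightarrow> 'a pmf"
  defines "m \<equiv> bind_pmf P K"
  shows "measure_pmf.expectation m
           (\<lambda>a. \<Sum>\<^sub>\<infinity>s. pmf P s * pmf (K s) a / pmf m a * pmf (K s) b) = pmf m b"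
proof -
  define k where "k s a = pmf P s * pmf (K s) a * pmf (K s) b" for s a
  have rows: "(k s has_sum pmf P s * pmf (K s) b) UNIV" for s
    using has_sum_cmult_left[OF has_sum_pmf[of "K s"], of "pmf P s * pmf (K s) b"]
    by (simp add: k_def[abs_def] ac_simps)
  have row_sums: "(\<lambda>s. pmf P s * pmf (K s) b) summable_on UNIV"
    by (rule summable_on_pmf_mult_bounded[where B = 1]) (auto simp: pmf_le_1)
  have summable: "(\<lambda>(s, a). k s a) summable_on UNIV \<times> UNIV"
    by (rule summable_on_SigmaI[where g = "\<lambda>s. pmf P s * pmf (K s) b", OF _ row_sums])
       (simp_all add: rows, simp add: k_def)
  have cols: "pmf m a * (\<Sum>\<^sub>\<infinity>s. pmf P s * pmf (K s) a / pmf m a * pmf (K s) b)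
      = (\<Sum>\<^sub>\<infinity>s. k s a)" for a
  proof (cases "pmf m a = 0")
    case True
    \<comment> \<open>the quotient is junk (division by zero), but every term of the right-hand sum vanishes\<close>
    then have "a \<notin> set_pmf m"
      by (simp add: set_pmf_eq)
    then have "k s a = 0" for s
      by (auto simp: k_def m_def set_pmf_iff)
    with True show ?thesis
      by simp
  next
    case False
    have "(\<Sum>\<^sub>\<infinity>s. pmf P s * pmf (K s) a / pmf m a * pmf (K s) b)
        = (\<Sum>\<^sub>\<infinity>s. k s a * inverse (pmf m a))"
      by (simp add: k_def divide_inverse mult_ac)
    also have "\<dots> = (\<Sum>\<^sub>\<infinity>s. k s a) * inverse (pmf m a)"
      by (rule infsum_cmult_left')
    finally show ?thesis
      using False by simp
  qed
  have "measure_pmf.expectation m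
          (\<lambda>a. \<Sum>\<^sub>\<infinity>s. pmf P s * pmf (K s) a / pmf m a * pmf (K s) b) = (\<Sum>\<^sub>\<infinity>a. \<Sum>\<^sub>\<infinity>s. k s a)"
    by (simp only: pmf_expectation_eq_infsum cols)
  also have "\<dots> = (\<Sum>\<^sub>\<infinity>s. \<Sum>\<^sub>\<infinity>a. k s a)"
    using summable by (rule infsum_swap_banach[symmetric])
  also have "\<dots> = (\<Sum>\<^sub>\<infinity>s. pmf P s * pmf (K s) b)"
    by (intro infsum_cong infsumI rows)
  also have "\<dots> = pmf m b"
    by (simp add: m_def pmf_bind_eq_infsum)
  finally show ?thesis .
qed

lemma ans_marg_eq_pmf_bind: "ans_marg pS pA q a = pmf (bind_pmf (pS q) (pA q)) a"
  by (simp add: ans_marg_def pmf_bind_eq_infsum)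

lemma map_snd_joint: "map_pmf snd (joint pS pA q) = bind_pmf (pS q) (pA q)"
  unfolding joint_def by (simp add: map_bind_pmf pmf.map_comp o_def)

lemma expectation_joint_answer:
  fixes f :: "'a \<Rightarrow> real"
  shows "measure_pmf.expectation (joint pS pA q) (\<lambda>(s, a). f a)
           = measure_pmf.expectation (bind_pmf (pS q) (pA q)) f"
  by (simp flip: map_snd_joint add: case_prod_unfold)

lemma expectation_cer:
  "measure_pmf.expectation (joint pS pA q) (\<lambda>(s, a). cer pS pA q a b)
     = pmf (bind_pmf (pS q) (pA q)) b"
  unfolding expectation_joint_answer cer_def sol_post_def ans_marg_eq_pmf_bind
  by (rule expectation_posterior_likelihood)

lemma expectation_joint_answer_indicator:
  "measure_pmf.expectation (joint pS pA q) (\<lambda>(s, a). if a = b then 1 else 0)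
     = pmf (bind_pmf (pS q) (pA q)) b"
  unfolding expectation_joint_answer
  by (subst integral_measure_pmf_real[where A = "{b}"]) (auto split: if_splits)

theorem theorem2:
  fixes D :: "('q::countable) pmf"
    and astar :: "'q \<Rightarrow> ('a::countable)"
    and pS :: "'q \<Rightarrow> ('s::countable) pmf"
    and pA :: "'q \<Rightarrow> 's \<Rightarrow> 'a pmf"
  shows "measure_pmf.expectation D (\<lambda>q. measure_pmf.expectation (joint pS pA q)
            (\<lambda>(s, a). cer pS pA q a (astar q)))
       = measure_pmf.expectation D (\<lambda>q. measure_pmf.expectation (joint pS pA q)
            (\<lambda>(s, a). if a = astar q then 1 else 0))"
  by (simp add: expectation_cer expectation_joint_answer_indicator)

end
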